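(* Let $L$ be a finite lattice. Then $\mathsf{C}(L)=\mathsf{Pol}_{0,1}(L)$ if and only if, for each join-irreducible element $a\in L$, the function $\chi_a$ is a (unary) polynomial of $L$.
   Context: $L$ is a finite lattice with least element $0$ and greatest element $1$. An $n$-ary aggregation function on $L$ ($n\ge 1$) is a map $A:L^n\to L$ that is nondecreasing in the componentwise order ($\mathbf x\le\mathbf y$ implies $A(\mathbf x)\le A(\mathbf y)$) and satisfies $A(0,\dots,0)=0$, $A(1,\dots,1)=1$. $\mathsf{C}(L)$ is the set of all aggregation functions on $L$ (of all arities). An $n$-ary polynomial on $L$ is any function $L^n\to L$ obtained in finitely many steps from projections and constant functions by pointwise joins and meets; $\mathsf{Pol}_{0,1}(L)$ is the set of polynomials $p$ (of arity $\ge1$) with $p(0,\dots,0)=0$ and $p(1,\dots,1)=1$. For $a\in L$, $\chi_a:L\to L$ is defined by $\chi_a(x)=1$ if $x\ge a$ and $x\ne 0$, and $\chi_a(x)=0$ otherwise. An element $a$ is join-irreducible if $a\neq 0$ and $a=b\vee c$ implies $a=b$ or $a=c$. *)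

theory Defs
  imports Main
begin

text \<open>An n-ary function on L is modelled as a function on lists; only its values on
lists of length n matter. The finite lattice L is a type of class
finite + bounded_lattice, with 0 = bot and 1 = top.\<close>

definition aggregation :: "nat \<Rightarrow> ('a::{finite,bounded_lattice} list \<Rightarrow> 'a) \<Rightarrow> bool" where
  "aggregation n A \<longleftrightarrow>
     (\<forall>xs ys. length xs = n \<longrightarrow> length ys = n \<longrightarrow> list_all2 (\<le>) xs ys \<longrightarrow> A xs \<le> A ys)
     \<and> A (replicate n bot) = bot \<and> A (replicate n top) = top"

inductive is_poly :: "nat \<Rightarrow> ('a::{finite,bounded_lattice} list \<Rightarrow> 'a) \<Rightarrow> bool" for n where
  proj: "i < n \<Longrightarrow> is_poly n (\<lambda>xs. xs ! i)"
| const: "is_poly n (\<lambda>xs. c)"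
| join: "is_poly n p \<Longrightarrow> is_poly n q \<Longrightarrow> is_poly n (\<lambda>xs. sup (p xs) (q xs))"
| meet: "is_poly n p \<Longrightarrow> is_poly n q \<Longrightarrow> is_poly n (\<lambda>xs. inf (p xs) (q xs))"

definition polynomial :: "nat \<Rightarrow> ('a::{finite,bounded_lattice} list \<Rightarrow> 'a) \<Rightarrow> bool" where
  "polynomial n f \<longleftrightarrow> (\<exists>p. is_poly n p \<and> (\<forall>xs. length xs = n \<longrightarrow> f xs = p xs))"

definition pol01 :: "nat \<Rightarrow> ('a::{finite,bounded_lattice} list \<Rightarrow> 'a) \<Rightarrow> bool" where
  "pol01 n f \<longleftrightarrow> polynomial n f \<and> f (replicate n bot) = bot \<and> f (replicate n top) = top"

definition chi :: "'a::{finite,bounded_lattice} \<Rightarrow> 'a \<Rightarrow> 'a" where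
  "chi a x = (if a \<le> x \<and> x \<noteq> bot then top else bot)"

definition join_irreducible :: "'a::{finite,bounded_lattice} \<Rightarrow> bool" where
  "join_irreducible a \<longleftrightarrow> a \<noteq> bot \<and> (\<forall>b c. a = sup b c \<longrightarrow> a = b \<or> a = c)"

end

theory Submission
  imports Defs
begin

text \<open>Polynomials are monotone, and each \<open>\<chi>\<^sub>a\<close> is a unary aggregation function, which gives
the easy implications. Conversely, a monotone \<open>f\<close> on \<open>L\<^sup>n\<close> is the join over all \<open>c \<in> L\<^sup>n\<close>
of \<open>f c \<sqinter> [c \<le> x]\<close>, where \<open>[c \<le> x]\<close> (\<open>1\<close> if \<open>c \<le> x\<close>, \<open>0\<close> otherwise) is the meet of
the \<open>[c\<^sub>i \<le> x\<^sub>i]\<close>. In a finite lattice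
every element is the join of the join-irreducibles below it, so
\<open>[c\<^sub>i \<le> x\<^sub>i]\<close> is the meet of the \<open>\<chi>\<^sub>j x\<^sub>i\<close> over join-irreducible \<open>j \<le> c\<^sub>i\<close>; hence polynomiality
of these \<open>\<chi>\<^sub>j\<close> makes every aggregation function a polynomial.\<close>

lemma wfP_less_finite: "wfP ((<) :: 'a::{finite,order} \<Rightarrow> 'a \<Rightarrow> bool)"
  using strict_partial_order_wfp_on_finite_set[of UNIV "(<) :: 'a \<Rightarrow> 'a \<Rightarrow> bool"]
  by (simp add: transp_on_def asymp_on_def) (blast intro: less_trans dest: less_asym)

lemma le_iff_join_irreducibles_le:
  fixes c x :: "'a::{finite,bounded_lattice}"
  shows "c \<le> x \<longleftrightarrow> (\<forall>j. join_irreducible j \<and> j \<le> c \<longrightarrow> j \<le> x)"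
proof
  show "c \<le> x \<Longrightarrow> \<forall>j. join_irreducible j \<and> j \<le> c \<longrightarrow> j \<le> x"
    using order_trans by blast
next
  show "\<forall>j. join_irreducible j \<and> j \<le> c \<longrightarrow> j \<le> x \<Longrightarrow> c \<le> x"
  proof (induction c rule: wfp_induct_rule[OF wfP_less_finite])
    case (1 c)
    show ?case
    proof (cases "c = bot \<or> join_irreducible c")
      case True
      then show ?thesis using "1.prems" by auto
    next
      case False
      then obtain b d where "c = sup b d" "b < c" "d < c"
        unfolding join_irreducible_def by (auto simp: less_le)
      with "1.IH" "1.prems" show ?thesis
        by (metis le_sup_iff less_imp_le order_trans)
    qed
  qed
qed

lemma Inf_fin_indicators:
  assumes "finite S"
  shows "Inf_fin (insert top ((\<lambda>s. if P s then top else bot) ` S))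
           = (if \<forall>s\<in>S. P s then top else (bot :: 'a::bounded_lattice))"
proof (cases "\<forall>s\<in>S. P s")
  case True
  then have "insert top ((\<lambda>s. if P s then top else (bot :: 'a)) ` S) = {top}" by auto
  with True show ?thesis by (simp only: Inf_fin.singleton) simp
next
  case False
  then have "Inf_fin (insert top ((\<lambda>s. if P s then top else bot) ` S)) \<le> (bot :: 'a)"
    using assms by (intro Inf_fin.coboundedI) force+
  with False show ?thesis by (metis bot_unique)
qed

lemma is_poly_mono:
  assumes "is_poly n p" "length xs = n" "list_all2 (\<le>) xs ys"
  shows "p xs \<le> p ys"
  using assms(1)
proof induction
  case (proj i)
  then show ?case using assms(2,3) by (simp add: list_all2_nthD)
next
  case (join p q)
  from join.IH show ?case by (rule sup_mono)
next
  case (meet p q)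
  from meet.IH show ?case by (rule inf_mono)
qed simp

lemma is_poly_unary_nth:
  assumes "is_poly 1 p" "i < n"
  shows "is_poly n (\<lambda>xs. p [xs ! i])"
  using assms(1)
proof induction
  case (proj j)
  then show ?case using assms(2) by (simp add: is_poly.proj)
qed (auto intro: is_poly.intros)

text \<open>\<open>Inf_fin\<close> and \<open>Sup_fin\<close> are only meaningful on nonempty sets; inserting \<open>top\<close>
(resp. \<open>bot\<close>) yields the meet (join) of an arbitrary finite family.\<close>

lemma is_poly_Inf_fin:
  assumes "finite S" "\<And>s. s \<in> S \<Longrightarrow> is_poly n (f s)"
  shows "is_poly n (\<lambda>xs. Inf_fin (insert top ((\<lambda>s. f s xs) ` S)))"
  using assms
proof (induction S rule: finite_induct)
  case empty
  then show ?case by (simp add: is_poly.const)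
next
  case (insert s S)
  have "Inf_fin (insert top ((\<lambda>s. f s xs) ` insert s S))
          = inf (f s xs) (Inf_fin (insert top ((\<lambda>s. f s xs) ` S)))" for xs
    using insert.hyps by (simp only: image_insert insert_commute[of top] Inf_fin.insert
        finite_insert finite_imageI insert_not_empty simp_thms)
  then show ?case using insert by (simp add: is_poly.meet)
qed

lemma is_poly_Sup_fin:
  assumes "finite S" "\<And>s. s \<in> S \<Longrightarrow> is_poly n (f s)"
  shows "is_poly n (\<lambda>xs. Sup_fin (insert bot ((\<lambda>s. f s xs) ` S)))"
  using assms
proof (induction S rule: finite_induct)
  case empty
  then show ?case by (simp add: is_poly.const)
next
  case (insert s S)
  have "Sup_fin (insert bot ((\<lambda>s. f s xs) ` insert s S))
          = sup (f s xs) (Sup_fin (insert bot ((\<lambda>s. f s xs) ` S)))" for xs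
    using insert.hyps by (simp only: image_insert insert_commute[of bot] Sup_fin.insert
        finite_insert finite_imageI insert_not_empty simp_thms)
  then show ?case using insert by (simp add: is_poly.join)
qed

lemma is_poly_chi_nth:
  assumes "polynomial 1 (\<lambda>xs. chi a (hd xs))" "i < n"
  shows "is_poly n (\<lambda>xs. chi a (xs ! i))"
proof -
  obtain p where "is_poly 1 p" and p: "\<And>x. p [x] = chi a x"
    using assms(1) unfolding polynomial_def by (metis One_nat_def length_Cons list.sel(1) list.size(3))
  have "is_poly n (\<lambda>xs. p [xs ! i])" using \<open>is_poly 1 p\<close> assms(2) by (rule is_poly_unary_nth)
  then show ?thesis by (simp only: p)
qed

lemma is_poly_threshold_nth:
  fixes c :: "'a::{finite,bounded_lattice}"
  assumes chi_poly: "\<And>a::'a. join_irreducible a \<Longrightarrow> polynomial 1 (\<lambda>xs. chi a (hd xs))"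
    and "i < n"
  shows "is_poly n (\<lambda>xs. if c \<le> xs ! i then top else bot)"
proof -
  let ?J = "{j. join_irreducible j \<and> j \<le> c}"
  have threshold_eq: "(if c \<le> x then top else bot) = Inf_fin (insert top ((\<lambda>j. chi j x) ` ?J))"
    for x :: 'a
  proof -
    have "finite ?J" by simp
    moreover have "c \<le> x \<longleftrightarrow> (\<forall>j\<in>?J. j \<le> x \<and> x \<noteq> bot)"
      using le_iff_join_irreducibles_le[of c x]
      unfolding join_irreducible_def by (auto dest: order_trans simp: bot_unique)
    ultimately show ?thesis unfolding chi_def by (simp only: Inf_fin_indicators)
  qed
  have "is_poly n (\<lambda>xs. Inf_fin (insert top ((\<lambda>j. chi j (xs ! i)) ` ?J)))"
    using chi_poly \<open>i < n\<close> by (intro is_poly_Inf_fin is_poly_chi_nth) auto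
  then show ?thesis by (simp only: threshold_eq)
qed

lemma is_poly_upset_indicator:
  fixes cs :: "'a::{finite,bounded_lattice} list"
  assumes "\<And>a::'a. join_irreducible a \<Longrightarrow> polynomial 1 (\<lambda>xs. chi a (hd xs))"
  shows "is_poly n (\<lambda>xs. if \<forall>i<n. cs ! i \<le> xs ! i then top else bot)"
proof -
  have "is_poly n (\<lambda>xs. Inf_fin (insert top ((\<lambda>i. if cs ! i \<le> xs ! i then top else bot) ` {..<n})))"
    using assms by (intro is_poly_Inf_fin is_poly_threshold_nth) auto
  then show ?thesis by (simp only: Inf_fin_indicators[OF finite_lessThan] Ball_def lessThan_iff)
qed

lemma finite_lists_length: "finite {xs :: 'a::finite list. length xs = n}"
  using finite_lists_length_eq[OF finite_class.finite_UNIV, of n] by simp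

lemma monotone_eq_Sup_fin_upset_indicators:
  fixes A :: "'a::{finite,bounded_lattice} list \<Rightarrow> 'a"
  assumes mono: "\<And>cs xs. length cs = n \<Longrightarrow> length xs = n \<Longrightarrow> list_all2 (\<le>) cs xs \<Longrightarrow> A cs \<le> A xs"
    and "length xs = n"
  shows "A xs = Sup_fin (insert bot ((\<lambda>cs. inf (A cs) (if \<forall>i<n. cs ! i \<le> xs ! i then top else bot))
                          ` {cs. length cs = n}))"
    (is "_ = Sup_fin (insert bot (?term ` ?C))")
proof (rule antisym)
  have fin: "finite (insert bot (?term ` ?C))"
    using finite_lists_length by blast
  have "?term xs \<in> insert bot (?term ` ?C)"
    using \<open>length xs = n\<close> by blast
  then have "?term xs \<le> Sup_fin (insert bot (?term ` ?C))"
    using fin by (rule Sup_fin.coboundedI[rotated])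
  then show "A xs \<le> Sup_fin (insert bot (?term ` ?C))" by simp
next
  have below: "?term cs \<le> A xs" if "length cs = n" for cs
  proof (cases "\<forall>i<n. cs ! i \<le> xs ! i")
    case True
    with that \<open>length xs = n\<close> have "A cs \<le> A xs" by (simp add: mono list_all2_conv_all_nth)
    with True show ?thesis by (simp add: le_infI1)
  qed auto
  have "finite (insert bot (?term ` ?C))"
    using finite_lists_length by blast
  then show "Sup_fin (insert bot (?term ` ?C)) \<le> A xs"
    by (rule Sup_fin.boundedI) (use below in auto)
qed

lemma aggregation_imp_polynomial:
  fixes A :: "'a::{finite,bounded_lattice} list \<Rightarrow> 'a"
  assumes "\<And>a::'a. join_irreducible a \<Longrightarrow> polynomial 1 (\<lambda>xs. chi a (hd xs))"
    and "aggregation n A"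
  shows "polynomial n A"
  unfolding polynomial_def
proof (intro exI conjI allI impI)
  show "is_poly n (\<lambda>xs. Sup_fin (insert bot
          ((\<lambda>cs. inf (A cs) (if \<forall>i<n. cs ! i \<le> xs ! i then top else bot)) ` {cs. length cs = n})))"
    using assms(1) finite_lists_length
    by (intro is_poly_Sup_fin is_poly.meet is_poly.const is_poly_upset_indicator)
  show "A xs = Sup_fin (insert bot
          ((\<lambda>cs. inf (A cs) (if \<forall>i<n. cs ! i \<le> xs ! i then top else bot)) ` {cs. length cs = n}))"
    if "length xs = n" for xs
    using assms(2) that unfolding aggregation_def by (intro monotone_eq_Sup_fin_upset_indicators) auto
qed

lemma pol01_imp_aggregation:
  assumes "pol01 n f"
  shows "aggregation n f"
proof -
  obtain p where "is_poly n p" and p: "\<And>xs. length xs = n \<Longrightarrow> f xs = p xs"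
    using assms unfolding pol01_def polynomial_def by blast
  then have "f xs \<le> f ys" if "length xs = n" "length ys = n" "list_all2 (\<le>) xs ys" for xs ys
    using that is_poly_mono by metis
  with assms show ?thesis unfolding aggregation_def pol01_def by blast
qed

lemma aggregation_chi: "aggregation 1 (\<lambda>xs. chi a (hd xs))"
  unfolding aggregation_def
proof (intro conjI allI impI)
  fix xs ys :: "'a list"
  assume "length xs = 1" "length ys = 1" "list_all2 (\<le>) xs ys"
  then obtain x y where "xs = [x]" "ys = [y]" "x \<le> y"
    by (metis One_nat_def length_0_conv length_Suc_conv list_all2_Cons)
  then show "chi a (hd xs) \<le> chi a (hd ys)"
    unfolding chi_def by (auto simp: bot_unique dest: order_trans)
qed (auto simp: chi_def)

lemma aggregation_iff_pol01:
  fixes f :: "'a::{finite,bounded_lattice} list \<Rightarrow> 'a"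
  assumes "\<And>a::'a. join_irreducible a \<Longrightarrow> polynomial 1 (\<lambda>xs. chi a (hd xs))"
  shows "aggregation n f \<longleftrightarrow> pol01 n f"
proof
  assume agg: "aggregation n f"
  with assms have "polynomial n f" by (rule aggregation_imp_polynomial)
  with agg show "pol01 n f" unfolding pol01_def aggregation_def by blast
qed (rule pol01_imp_aggregation)

theorem mainTheorem2:
  shows "(\<forall>n\<ge>1. \<forall>f :: 'a::{finite,bounded_lattice} list \<Rightarrow> 'a.
            aggregation n f \<longleftrightarrow> pol01 n f)
     \<longleftrightarrow> (\<forall>a :: 'a. join_irreducible a \<longrightarrow> polynomial 1 (\<lambda>xs. chi a (hd xs)))"
proof
  assume agg_iff_pol01: "\<forall>n\<ge>1. \<forall>f :: 'a list \<Rightarrow> 'a. aggregation n f \<longleftrightarrow> pol01 n f"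
  show "\<forall>a :: 'a. join_irreducible a \<longrightarrow> polynomial 1 (\<lambda>xs. chi a (hd xs))"
  proof (intro allI impI)
    fix a :: 'a
    have "pol01 1 (\<lambda>xs. chi a (hd xs))"
      using agg_iff_pol01 aggregation_chi by blast
    then show "polynomial 1 (\<lambda>xs. chi a (hd xs))" unfolding pol01_def by blast
  qed
next
  assume "\<forall>a :: 'a. join_irreducible a \<longrightarrow> polynomial 1 (\<lambda>xs. chi a (hd xs))"
  then show "\<forall>n\<ge>1. \<forall>f :: 'a list \<Rightarrow> 'a. aggregation n f \<longleftrightarrow> pol01 n f"
    using aggregation_iff_pol01 by blast
qed

end
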